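(* Let $P_X$ be a probability distribution on a context space $\mathcal{X}$, let $\mathcal{A}$ be a finite action set, and let $\pi_0,\pi_\theta$ be policies with $\pi_0(a|x)>0$ for all $(x,a)$. Let $f_r:\mathcal{X}\times\mathcal{A}\to[c,b]$ be a measurable reward function with $b\ge 0$, and set $w(a,x)=\pi_\theta(a|x)/\pi_0(a|x)$. Suppose that the random variable $w(A,X)f_r^2(A,X)$ is $\sigma$-sub-Gaussian both when $(X,A)\sim P_X\otimes\pi_0(A|X)$ and when $(X,A)\sim P_X\otimes\pi_\theta(A|X)$. Then $$\operatorname{Var}\bigl(w(A,X)f_r(A,X)\bigr)\le \sqrt{2\sigma^2\min\bigl(D(\pi_\theta\|\pi_0),D_r(\pi_\theta\|\pi_0)\bigr)}+b_u^2-c_l^2,$$ where $c_l=\max(c,0)$, $b_u=\max(|c|,b)$, and the variance is taken under $(X,A)\sim P_X\otimes\pi_0(A|X)$.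
   Context: A policy is a conditional distribution $\pi(a|x)$ over $\mathcal{A}$ given $x\in\mathcal{X}$; $P_X\otimes\pi(A|X)$ denotes the joint law of $(X,A)$ with $X\sim P_X$, $A|X=x\sim\pi(\cdot|x)$. The true risk is $R(\pi)=\mathbb{E}_{P_X}[\mathbb{E}_{\pi(A|X)}[f_r(X,A)]]$. The variance is $\operatorname{Var}(w f_r)=\mathbb{E}_{P_X\otimes\pi_0}[(w(A,X)f_r(A,X))^2]-R^2(\pi_\theta)$ (note $\mathbb{E}_{P_X\otimes\pi_0}[w f_r]=R(\pi_\theta)$). Conditional KL: $D(\pi_\theta\|\pi_0)=D(\pi_\theta(A|X)\|\pi_0(A|X)|P_X)=\int_{\mathcal{X}} D(\pi_\theta(\cdot|x)\|\pi_0(\cdot|x))\,dP_X(x)$, and reverse conditional KL $D_r(\pi_\theta\|\pi_0)=D(\pi_0(A|X)\|\pi_\theta(A|X)|P_X)$, where $D(P\|Q)=\int\log\frac{dP}{dQ}dP$ (or $+\infty$ if $P\not\ll Q$). A random variable $Y$ is $\sigma$-sub-Gaussian if $\mathbb{E}[e^{\gamma(Y-\mathbb{E}Y)}]\le e^{\gamma^2\sigma^2/2}$ for all $\gamma\in\mathbb{R}$. *)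

theory Defs
  imports "HOL-Probability.Probability"
begin

definition is_policy :: "'x measure \<Rightarrow> 'a set \<Rightarrow> ('x \<Rightarrow> 'a \<Rightarrow> real) \<Rightarrow> bool" where
  "is_policy PX A pol \<longleftrightarrow>
     (\<forall>a\<in>A. (\<lambda>x. pol x a) \<in> borel_measurable PX) \<and>
     (\<forall>x\<in>space PX. (\<forall>a\<in>A. 0 \<le> pol x a) \<and> (\<Sum>a\<in>A. pol x a) = 1)"

definition joint :: "'x measure \<Rightarrow> 'a set \<Rightarrow> ('x \<Rightarrow> 'a \<Rightarrow> real) \<Rightarrow> ('x \<times> 'a) measure" where
  "joint PX A pol = density (PX \<Otimes>\<^sub>M count_space A) (\<lambda>(x, a). ennreal (pol x a))"

text \<open>KL divergence D(p || q) of two distributions on the finite set A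
  (0 log 0 = 0; +infinity if p is not absolutely continuous w.r.t. q).\<close>
definition kl_fin :: "'a set \<Rightarrow> ('a \<Rightarrow> real) \<Rightarrow> ('a \<Rightarrow> real) \<Rightarrow> ennreal" where
  "kl_fin A p q =
     (if \<forall>a\<in>A. q a = 0 \<longrightarrow> p a = 0
      then ennreal (\<Sum>a\<in>A. if p a = 0 then 0 else p a * ln (p a / q a))
      else \<infinity>)"

definition cond_KL :: "'x measure \<Rightarrow> 'a set \<Rightarrow> ('x \<Rightarrow> 'a \<Rightarrow> real) \<Rightarrow> ('x \<Rightarrow> 'a \<Rightarrow> real) \<Rightarrow> ennreal" where
  "cond_KL PX A p q = (\<integral>\<^sup>+ x. kl_fin A (p x) (q x) \<partial>PX)"

definition sub_gaussian :: "'b measure \<Rightarrow> ('b \<Rightarrow> real) \<Rightarrow> real \<Rightarrow> bool" where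
  "sub_gaussian M Y \<sigma> \<longleftrightarrow> integrable M Y \<and>
     (\<forall>\<gamma>::real. integrable M (\<lambda>z. exp (\<gamma> * (Y z - (\<integral>z. Y z \<partial>M)))) \<and>
        (\<integral>z. exp (\<gamma> * (Y z - (\<integral>z. Y z \<partial>M))) \<partial>M) \<le> exp (\<gamma>\<^sup>2 * \<sigma>\<^sup>2 / 2))"

end

theory Submission
  imports Defs
begin

text \<open>
  Write \<open>w = \<pi>\<theta>/\<pi>0\<close>. Importance weighting turns the second moment of \<open>w f\<close> under \<open>\<pi>0\<close>
  into the mean of \<open>Y = w f\<^sup>2\<close> under \<open>\<pi>\<theta>\<close>, and the mean of \<open>w f\<close> under \<open>\<pi>0\<close> into the mean
  of \<open>f \<ge> c\<close> under \<open>\<pi>\<theta>\<close>. The Donsker-Varadhan inequality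
  \<open>E\<^sub>P h \<le> D(P\<parallel>Q) + E\<^sub>Q e\<^sup>h - 1\<close>, applied to \<open>h = \<gamma>(Y - E\<^sub>Q Y) - \<gamma>\<^sup>2\<sigma>\<^sup>2/2\<close> and optimised
  over \<open>\<gamma>\<close>, shows that the means of the sub-Gaussian \<open>Y\<close> under the two policies differ by
  at most \<open>sqrt (2\<sigma>\<^sup>2 D)\<close>, in either direction of the KL divergence. Finally
  \<open>E\<^sub>\<pi>\<^sub>0 Y = E\<^sub>\<pi>\<^sub>\<theta> f\<^sup>2 \<le> b\<^sub>u\<^sup>2\<close>.
\<close>

lemma measurable_policy:
  assumes "finite A" "is_policy PX A pol"
  shows "(\<lambda>z. pol (fst z) (snd z)) \<in> borel_measurable (PX \<Otimes>\<^sub>M count_space A)"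
proof -
  have "(\<lambda>z. (\<lambda>a z. pol (fst z) a) (snd z) z) \<in> borel_measurable (PX \<Otimes>\<^sub>M count_space A)"
  proof (rule measurable_compose_countable'[where I=A])
    fix a assume "a \<in> A"
    then have "(\<lambda>x. pol x a) \<in> borel_measurable PX"
      using assms(2) by (auto simp: is_policy_def)
    then show "(\<lambda>z. pol (fst z) a) \<in> borel_measurable (PX \<Otimes>\<^sub>M count_space A)"
      by measurable
  qed (auto simp: assms(1) countable_finite)
  then show ?thesis by simp
qed

lemma nn_integral_pair_count_space:
  assumes "finite A" "k \<in> borel_measurable (PX \<Otimes>\<^sub>M count_space A)"
  shows "(\<integral>\<^sup>+z. k z \<partial>(PX \<Otimes>\<^sub>M count_space A)) = (\<integral>\<^sup>+x. (\<Sum>a\<in>A. k (x, a)) \<partial>PX)"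
proof -
  interpret sigma_finite_measure "count_space A"
    by (rule sigma_finite_measure_count_space_finite[OF assms(1)])
  show ?thesis
    using nn_integral_fst[OF assms(2)] by (simp add: nn_integral_count_space_finite[OF assms(1)])
qed

lemma integrable_pair_count_space_iff:
  fixes h :: "'x \<times> 'a \<Rightarrow> real"
  assumes "finite A" "h \<in> borel_measurable (PX \<Otimes>\<^sub>M count_space A)"
  shows "integrable (PX \<Otimes>\<^sub>M count_space A) h \<longleftrightarrow> (\<forall>a\<in>A. integrable PX (\<lambda>x. h (x, a)))"
proof -
  have sections: "(\<lambda>x. h (x, a)) \<in> borel_measurable PX" if "a \<in> A" for a
    using measurable_Pair2'[of a "count_space A" PX] assms(2) that by simp
  have "(\<integral>\<^sup>+z. ennreal (norm (h z)) \<partial>(PX \<Otimes>\<^sub>M count_space A))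
      = (\<integral>\<^sup>+x. (\<Sum>a\<in>A. ennreal (norm (h (x, a)))) \<partial>PX)"
    using assms by (intro nn_integral_pair_count_space) measurable
  also have "\<dots> = (\<Sum>a\<in>A. \<integral>\<^sup>+x. ennreal (norm (h (x, a))) \<partial>PX)"
    using sections by (intro nn_integral_sum) measurable
  finally have eq: "(\<integral>\<^sup>+z. ennreal (norm (h z)) \<partial>(PX \<Otimes>\<^sub>M count_space A))
      = (\<Sum>a\<in>A. \<integral>\<^sup>+x. ennreal (norm (h (x, a))) \<partial>PX)" .
  show ?thesis
    unfolding integrable_iff_bounded eq using assms sections
    by (auto simp: ennreal_sum_less_top)
qed

lemma integral_pair_count_space:
  fixes h :: "'x \<times> 'a \<Rightarrow> real"
  assumes "sigma_finite_measure PX" "finite A" "integrable (PX \<Otimes>\<^sub>M count_space A) h"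
  shows "(\<integral>z. h z \<partial>(PX \<Otimes>\<^sub>M count_space A)) = (\<integral>x. (\<Sum>a\<in>A. h (x, a)) \<partial>PX)"
proof -
  interpret PX: sigma_finite_measure PX by fact
  interpret A: sigma_finite_measure "count_space A"
    by (rule sigma_finite_measure_count_space_finite[OF assms(2)])
  interpret pair_sigma_finite PX "count_space A" ..
  show ?thesis
    using integral_fst'[OF assms(3)] by (simp add: lebesgue_integral_count_space_finite[OF assms(2)])
qed

lemma joint_altdef:
  "joint PX A pol = density (PX \<Otimes>\<^sub>M count_space A) (\<lambda>z. ennreal (pol (fst z) (snd z)))"
  unfolding joint_def by (simp add: case_prod_beta')

lemma policy_nonneg_AE:
  "is_policy PX A pol \<Longrightarrow> AE z in PX \<Otimes>\<^sub>M count_space A. 0 \<le> pol (fst z) (snd z)"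
  by (intro AE_I2) (auto simp: space_pair_measure is_policy_def)

lemma integrable_joint_iff:
  fixes g :: "'x \<times> 'a \<Rightarrow> real"
  assumes "finite A" "is_policy PX A pol" "g \<in> borel_measurable (PX \<Otimes>\<^sub>M count_space A)"
  shows "integrable (joint PX A pol) g \<longleftrightarrow> (\<forall>a\<in>A. integrable PX (\<lambda>x. pol x a * g (x, a)))"
proof -
  note pol = measurable_policy[OF assms(1,2)]
  have "(\<lambda>z. pol (fst z) (snd z) *\<^sub>R g z) \<in> borel_measurable (PX \<Otimes>\<^sub>M count_space A)"
    using pol assms(3) by measurable
  then show ?thesis
    unfolding joint_altdef integrable_density[OF assms(3) pol policy_nonneg_AE[OF assms(2)]]
    by (simp add: integrable_pair_count_space_iff[OF assms(1)])
qed

lemma integral_joint: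
  fixes g :: "'x \<times> 'a \<Rightarrow> real"
  assumes "sigma_finite_measure PX" "finite A" "is_policy PX A pol"
    and "integrable (joint PX A pol) g"
  shows "(\<integral>z. g z \<partial>joint PX A pol) = (\<integral>x. (\<Sum>a\<in>A. pol x a * g (x, a)) \<partial>PX)"
proof -
  note pol = measurable_policy[OF assms(2,3)] and nonneg = policy_nonneg_AE[OF assms(3)]
  have g: "g \<in> borel_measurable (PX \<Otimes>\<^sub>M count_space A)"
    using borel_measurable_integrable[OF assms(4)] by (simp add: joint_altdef)
  have "integrable (PX \<Otimes>\<^sub>M count_space A) (\<lambda>z. pol (fst z) (snd z) *\<^sub>R g z)"
    using assms(4) unfolding joint_altdef integrable_density[OF g pol nonneg] .
  then show ?thesis
    unfolding joint_altdef integral_density[OF g pol nonneg]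
    by (simp add: integral_pair_count_space[OF assms(1,2)])
qed

lemma prob_space_joint:
  assumes "prob_space PX" "finite A" "is_policy PX A pol"
  shows "prob_space (joint PX A pol)"
proof (rule prob_spaceI)
  interpret PX: prob_space PX by fact
  note pol = measurable_policy[OF assms(2,3)]
  have "emeasure (joint PX A pol) (space (joint PX A pol))
      = (\<integral>\<^sup>+z. ennreal (pol (fst z) (snd z)) \<partial>(PX \<Otimes>\<^sub>M count_space A))"
    unfolding joint_altdef using pol
    by (subst emeasure_density) (auto intro!: nn_integral_cong)
  also have "\<dots> = (\<integral>\<^sup>+x. (\<Sum>a\<in>A. ennreal (pol x a)) \<partial>PX)"
    using pol by (subst nn_integral_pair_count_space[OF assms(2)]) auto
  also have "\<dots> = (\<integral>\<^sup>+x. 1 \<partial>PX)"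
    using assms(3) by (intro nn_integral_cong) (auto simp: is_policy_def sum_ennreal)
  finally show "emeasure (joint PX A pol) (space (joint PX A pol)) = 1"
    by (simp add: PX.emeasure_space_1)
qed

lemma space_joint: "space (joint PX A pol) = space PX \<times> A"
  by (simp add: joint_def space_pair_measure)

lemma integrable_joint_bounded:
  fixes g :: "'x \<times> 'a \<Rightarrow> real"
  assumes "prob_space PX" "finite A" "is_policy PX A pol"
    and "g \<in> borel_measurable (PX \<Otimes>\<^sub>M count_space A)" "\<forall>z\<in>space PX \<times> A. \<bar>g z\<bar> \<le> B"
  shows "integrable (joint PX A pol) g"
proof -
  interpret prob_space "joint PX A pol" by (rule prob_space_joint[OF assms(1-3)])
  show ?thesis
  proof (rule integrable_const_bound[where B=B])
    show "AE z in joint PX A pol. norm (g z) \<le> B"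
      using assms(5) by (intro AE_I2) (auto simp: space_joint)
    show "g \<in> borel_measurable (joint PX A pol)"
      using assms(4) by (simp add: joint_altdef)
  qed
qed

lemma importance_weighting:
  fixes g :: "'x \<times> 'a \<Rightarrow> real"
  assumes "sigma_finite_measure PX" "finite A" "is_policy PX A p" "is_policy PX A q"
    and "\<forall>x\<in>space PX. \<forall>a\<in>A. 0 < q x a"
    and "integrable (joint PX A p) g"
  shows "integrable (joint PX A q) (\<lambda>(x, a). p x a / q x a * g (x, a))"
    and "(\<integral>z. (\<lambda>(x, a). p x a / q x a * g (x, a)) z \<partial>joint PX A q) = (\<integral>z. g z \<partial>joint PX A p)"
proof -
  have g: "g \<in> borel_measurable (PX \<Otimes>\<^sub>M count_space A)"
    using borel_measurable_integrable[OF assms(6)] by (simp add: joint_altdef)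
  have weighted: "(\<lambda>(x, a). p x a / q x a * g (x, a)) \<in> borel_measurable (PX \<Otimes>\<^sub>M count_space A)"
    using measurable_policy[OF assms(2,3)] measurable_policy[OF assms(2,4)] g
    by (simp add: case_prod_beta')
  have cancel: "q x a * (p x a / q x a * g (x, a)) = p x a * g (x, a)"
    if "x \<in> space PX" "a \<in> A" for x a
    using assms(5) that by force
  have "integrable PX (\<lambda>x. q x a * (p x a / q x a * g (x, a))) \<longleftrightarrow> integrable PX (\<lambda>x. p x a * g (x, a))"
    if "a \<in> A" for a
    using cancel that by (intro Bochner_Integration.integrable_cong) auto
  then show int: "integrable (joint PX A q) (\<lambda>(x, a). p x a / q x a * g (x, a))"
    using assms(6)
    unfolding integrable_joint_iff[OF assms(2,4) weighted] integrable_joint_iff[OF assms(2,3) g]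
    by simp
  show "(\<integral>z. (\<lambda>(x, a). p x a / q x a * g (x, a)) z \<partial>joint PX A q) = (\<integral>z. g z \<partial>joint PX A p)"
    unfolding integral_joint[OF assms(1,2,4) int] integral_joint[OF assms(1-3,6)]
    using cancel by (intro Bochner_Integration.integral_cong sum.cong) auto
qed

definition kl_sum :: "'a set \<Rightarrow> ('a \<Rightarrow> real) \<Rightarrow> ('a \<Rightarrow> real) \<Rightarrow> real" where
  "kl_sum A p q = (\<Sum>a\<in>A. if p a = 0 then 0 else p a * ln (p a / q a))"

lemma mult_minus_relative_entropy_le:
  fixes P Q g :: real
  assumes "0 \<le> P" "0 \<le> Q" "P > 0 \<Longrightarrow> Q > 0"
  shows "P * g - (if P = 0 then 0 else P * ln (P / Q)) \<le> Q * exp g - P"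
proof (cases "P = 0")
  case True
  then show ?thesis using assms by auto
next
  case False
  then have P: "P > 0" and Q: "Q > 0" using assms by auto
  have "P * ln (Q * exp g / P) \<le> P * (Q * exp g / P - 1)"
    using P Q by (intro mult_left_mono ln_le_minus_one) auto
  then show ?thesis
    using P Q False by (simp add: ln_mult ln_div algebra_simps)
qed

lemma sum_mult_le_kl_sum:
  assumes "finite A" "\<forall>a\<in>A. 0 \<le> p a" "\<forall>a\<in>A. q a = 0 \<longrightarrow> p a = 0" "\<forall>a\<in>A. 0 \<le> q a"
    and "(\<Sum>a\<in>A. p a) = 1"
  shows "(\<Sum>a\<in>A. p a * g a) \<le> kl_sum A p q + (\<Sum>a\<in>A. q a * exp (g a)) - 1"
proof -
  have "(\<Sum>a\<in>A. p a * g a - (if p a = 0 then 0 else p a * ln (p a / q a)))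
      \<le> (\<Sum>a\<in>A. q a * exp (g a) - p a)"
    using assms(2-4) by (intro sum_mono mult_minus_relative_entropy_le) force+
  then show ?thesis
    using assms(5) by (simp add: kl_sum_def sum_subtractf)
qed

lemma kl_sum_nonneg:
  assumes "finite A" "\<forall>a\<in>A. 0 \<le> p a" "\<forall>a\<in>A. q a = 0 \<longrightarrow> p a = 0" "\<forall>a\<in>A. 0 \<le> q a"
    and "(\<Sum>a\<in>A. p a) = 1" "(\<Sum>a\<in>A. q a) = 1"
  shows "0 \<le> kl_sum A p q"
  using sum_mult_le_kl_sum[OF assms(1-5), of "\<lambda>_. 0"] assms(6) by simp

lemma borel_measurable_kl_sum:
  assumes "finite A" "is_policy PX A p" "is_policy PX A q"
  shows "(\<lambda>x. kl_sum A (p x) (q x)) \<in> borel_measurable PX"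
  unfolding kl_sum_def
proof (rule borel_measurable_sum)
  fix a assume "a \<in> A"
  then have [measurable]: "(\<lambda>x. p x a) \<in> borel_measurable PX" "(\<lambda>x. q x a) \<in> borel_measurable PX"
    using assms(2,3) by (auto simp: is_policy_def)
  show "(\<lambda>x. if p x a = 0 then 0 else p x a * ln (p x a / q x a)) \<in> borel_measurable PX"
    by measurable
qed

lemma cond_KL_finite:
  assumes "finite A" "is_policy PX A p" "is_policy PX A q" "cond_KL PX A p q \<noteq> \<infinity>"
  shows "AE x in PX. \<forall>a\<in>A. q x a = 0 \<longrightarrow> p x a = 0"
    and "integrable PX (\<lambda>x. kl_sum A (p x) (q x))"
    and "(\<integral>x. kl_sum A (p x) (q x) \<partial>PX) = enn2real (cond_KL PX A p q)"
proof -
  note kl = borel_measurable_kl_sum[OF assms(1-3)]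
  have abs_cont: "Measurable.pred PX (\<lambda>x. \<forall>a\<in>A. q x a = 0 \<longrightarrow> p x a = 0)"
  proof (rule pred_intros_finite(3)[OF assms(1)])
    fix a assume "a \<in> A"
    then have [measurable]: "(\<lambda>x. p x a) \<in> borel_measurable PX" "(\<lambda>x. q x a) \<in> borel_measurable PX"
      using assms(2,3) by (auto simp: is_policy_def)
    show "Measurable.pred PX (\<lambda>x. q x a = 0 \<longrightarrow> p x a = 0)"
      by measurable
  qed
  have kl_fin: "kl_fin A (p x) (q x)
      = (if \<forall>a\<in>A. q x a = 0 \<longrightarrow> p x a = 0 then ennreal (kl_sum A (p x) (q x)) else \<infinity>)" for x
    by (simp add: kl_fin_def kl_sum_def)
  have "(\<lambda>x. kl_fin A (p x) (q x)) \<in> borel_measurable PX"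
    unfolding kl_fin using kl abs_cont by measurable
  then have "AE x in PX. kl_fin A (p x) (q x) \<noteq> \<infinity>"
    using nn_integral_PInf_AE assms(4) unfolding cond_KL_def by blast
  then show AE: "AE x in PX. \<forall>a\<in>A. q x a = 0 \<longrightarrow> p x a = 0"
    by eventually_elim (auto simp: kl_fin split: if_splits)
  have nonneg: "AE x in PX. 0 \<le> kl_sum A (p x) (q x)"
    using AE AE_space
  proof eventually_elim
    case (elim x)
    then show ?case
      using assms(1-3) by (intro kl_sum_nonneg) (auto simp: is_policy_def)
  qed
  have KL: "cond_KL PX A p q = (\<integral>\<^sup>+x. ennreal (kl_sum A (p x) (q x)) \<partial>PX)"
    unfolding cond_KL_def using AE by (intro nn_integral_cong_AE) (auto elim!: eventually_mono simp: kl_fin)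
  show "integrable PX (\<lambda>x. kl_sum A (p x) (q x))"
    using assms(4) KL by (intro integrableI_nonneg[OF kl nonneg]) (simp add: less_top)
  show "(\<integral>x. kl_sum A (p x) (q x) \<partial>PX) = enn2real (cond_KL PX A p q)"
    using integral_eq_nn_integral[OF kl nonneg] KL by simp
qed

lemma integral_joint_le_cond_KL:
  fixes h :: "'x \<times> 'a \<Rightarrow> real"
  assumes "prob_space PX" "finite A" "is_policy PX A p" "is_policy PX A q"
    and "cond_KL PX A p q \<noteq> \<infinity>"
    and "integrable (joint PX A p) h" "integrable (joint PX A q) (\<lambda>z. exp (h z))"
  shows "(\<integral>z. h z \<partial>joint PX A p) \<le> enn2real (cond_KL PX A p q) + (\<integral>z. exp (h z) \<partial>joint PX A q) - 1"
proof -
  interpret PX: prob_space PX by fact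
  have sigma: "sigma_finite_measure PX" ..
  note KL = cond_KL_finite[OF assms(2-5)]
  have [measurable]: "h \<in> borel_measurable (PX \<Otimes>\<^sub>M count_space A)"
    using borel_measurable_integrable[OF assms(6)] by (simp add: joint_altdef)
  have int_p: "integrable PX (\<lambda>x. \<Sum>a\<in>A. p x a * h (x, a))"
    using assms(6) by (auto simp: integrable_joint_iff[OF assms(2,3)])
  have int_q: "integrable PX (\<lambda>x. \<Sum>a\<in>A. q x a * exp (h (x, a)))"
    using assms(7) by (auto simp: integrable_joint_iff[OF assms(2,4)])
  have "AE x in PX. (\<Sum>a\<in>A. p x a * h (x, a))
      \<le> kl_sum A (p x) (q x) + (\<Sum>a\<in>A. q x a * exp (h (x, a))) - 1"
    using KL(1) AE_space
  proof eventually_elim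
    case (elim x)
    then show ?case
      using assms(2-4) by (intro sum_mult_le_kl_sum) (auto simp: is_policy_def)
  qed
  then have "(\<integral>x. (\<Sum>a\<in>A. p x a * h (x, a)) \<partial>PX)
      \<le> (\<integral>x. kl_sum A (p x) (q x) + (\<Sum>a\<in>A. q x a * exp (h (x, a))) - 1 \<partial>PX)"
    using int_p int_q KL(2) by (intro integral_mono_AE) auto
  also have "\<dots> = (\<integral>x. kl_sum A (p x) (q x) \<partial>PX) + (\<integral>x. (\<Sum>a\<in>A. q x a * exp (h (x, a))) \<partial>PX) - 1"
    using int_q KL(2) by (simp add: PX.prob_space)
  finally show ?thesis
    by (simp add: KL(3) integral_joint[OF sigma assms(2,3,6)] integral_joint[OF sigma assms(2,4,7)])
qed

lemma abs_le_sqrt_if_linear_le_quadratic: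
  fixes \<Delta> d s :: real
  assumes "0 \<le> s" and bound: "\<And>\<gamma>. \<gamma> * \<Delta> \<le> d + \<gamma>\<^sup>2 * s / 2"
  shows "\<bar>\<Delta>\<bar> \<le> sqrt (2 * s * d)"
proof -
  have abs_bound: "\<gamma> * \<bar>\<Delta>\<bar> \<le> d + \<gamma>\<^sup>2 * s / 2" for \<gamma>
    using bound[of \<gamma>] bound[of "-\<gamma>"] by (cases "0 \<le> \<Delta>") auto
  have "0 \<le> d" using bound[of 0] by simp
  consider "\<Delta> = 0" | "s = 0" "\<Delta> \<noteq> 0" | "0 < s" "\<Delta> \<noteq> 0"
    using assms(1) by linarith
  then show ?thesis
  proof cases
    case 1
    then show ?thesis using \<open>0 \<le> d\<close> assms(1) by simp
  next
    case 2
    then show ?thesis using abs_bound[of "(d + 1) / \<bar>\<Delta>\<bar>"] by simp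
  next
    case 3
    have "\<bar>\<Delta>\<bar> / s * \<bar>\<Delta>\<bar> \<le> d + (\<bar>\<Delta>\<bar> / s)\<^sup>2 * s / 2"
      by (rule abs_bound)
    then have "\<Delta>\<^sup>2 \<le> 2 * s * d"
      using 3 by (simp add: power2_eq_square field_simps)
    then show ?thesis by (simp add: real_le_rsqrt)
  qed
qed

lemma sub_gaussian_mean_deviation_le_cond_KL:
  fixes Y :: "'x \<times> 'a \<Rightarrow> real"
  assumes "prob_space PX" "finite A" "is_policy PX A p" "is_policy PX A q"
    and "cond_KL PX A p q \<noteq> \<infinity>"
    and "integrable (joint PX A p) Y" "sub_gaussian (joint PX A q) Y \<sigma>"
  shows "\<bar>(\<integral>z. Y z \<partial>joint PX A p) - (\<integral>z. Y z \<partial>joint PX A q)\<bar>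
      \<le> sqrt (2 * \<sigma>\<^sup>2 * enn2real (cond_KL PX A p q))"
proof (rule abs_le_sqrt_if_linear_le_quadratic)
  interpret P: prob_space "joint PX A p" by (rule prob_space_joint[OF assms(1-3)])
  fix \<gamma> :: real
  define m where "m = (\<integral>z. Y z \<partial>joint PX A q)"
  define c where "c = \<gamma>\<^sup>2 * \<sigma>\<^sup>2 / 2"
  have mgf: "integrable (joint PX A q) (\<lambda>z. exp (\<gamma> * (Y z - m)))"
    "(\<integral>z. exp (\<gamma> * (Y z - m)) \<partial>joint PX A q) \<le> exp c"
    using assms(7) by (auto simp: sub_gaussian_def m_def c_def)
  have exp_shift: "exp (\<gamma> * (Y z - m) - c) = exp (\<gamma> * (Y z - m)) / exp c" for z
    by (simp add: exp_diff)
  have "(\<integral>z. \<gamma> * (Y z - m) - c \<partial>joint PX A p)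
      \<le> enn2real (cond_KL PX A p q) + (\<integral>z. exp (\<gamma> * (Y z - m) - c) \<partial>joint PX A q) - 1"
    using assms(6) mgf(1)
    by (intro integral_joint_le_cond_KL[OF assms(1-5)]) (auto simp: exp_shift)
  also have "\<dots> \<le> enn2real (cond_KL PX A p q)"
    using mgf(2) unfolding exp_shift by simp
  finally show "\<gamma> * ((\<integral>z. Y z \<partial>joint PX A p) - m) \<le> enn2real (cond_KL PX A p q) + \<gamma>\<^sup>2 * \<sigma>\<^sup>2 / 2"
    using assms(6) by (simp add: P.prob_space c_def algebra_simps)
qed simp

lemma mean_deviation_le_min_cond_KL:
  fixes Y :: "'x \<times> 'a \<Rightarrow> real"
  assumes "prob_space PX" "finite A" "is_policy PX A p" "is_policy PX A q"
    and "sub_gaussian (joint PX A p) Y \<sigma>" "sub_gaussian (joint PX A q) Y \<sigma>"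
    and "min (cond_KL PX A p q) (cond_KL PX A q p) \<noteq> \<infinity>"
  shows "\<bar>(\<integral>z. Y z \<partial>joint PX A p) - (\<integral>z. Y z \<partial>joint PX A q)\<bar>
      \<le> sqrt (2 * \<sigma>\<^sup>2 * enn2real (min (cond_KL PX A p q) (cond_KL PX A q p)))"
proof (cases "cond_KL PX A p q \<le> cond_KL PX A q p")
  case True
  then show ?thesis
    using assms sub_gaussian_mean_deviation_le_cond_KL[OF assms(1-4), of Y \<sigma>]
    by (simp add: min_def sub_gaussian_def)
next
  case False
  then show ?thesis
    using assms sub_gaussian_mean_deviation_le_cond_KL[OF assms(1,2,4,3), of Y \<sigma>]
    by (simp add: min_def sub_gaussian_def abs_minus_commute)
qed

lemma variance_importance_weighted:
  fixes f :: "'x \<times> 'a \<Rightarrow> real"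
  assumes "prob_space PX" "finite A" "is_policy PX A p" "is_policy PX A q"
    and "\<forall>x\<in>space PX. \<forall>a\<in>A. 0 < q x a"
    and "integrable (joint PX A p) f" "integrable (joint PX A p) (\<lambda>(x, a). p x a / q x a * (f (x, a))\<^sup>2)"
  shows "(\<integral>z. ((\<lambda>(x, a). p x a / q x a * f (x, a)) z
            - (\<integral>z. (\<lambda>(x, a). p x a / q x a * f (x, a)) z \<partial>joint PX A q))\<^sup>2 \<partial>joint PX A q)
    = (\<integral>z. (\<lambda>(x, a). p x a / q x a * (f (x, a))\<^sup>2) z \<partial>joint PX A p) - (\<integral>z. f z \<partial>joint PX A p)\<^sup>2"
proof -
  interpret PX: prob_space PX by fact
  interpret Q: prob_space "joint PX A q" by (rule prob_space_joint[OF assms(1,2,4)])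
  have sigma: "sigma_finite_measure PX" ..
  define W where "W = (\<lambda>(x, a). p x a / q x a * f (x, a))"
  note first = importance_weighting[OF sigma assms(2-5,6), folded W_def]
    and second = importance_weighting[OF sigma assms(2-5,7)]
  have "(\<lambda>(x, a). p x a / q x a * (\<lambda>(x, a). p x a / q x a * (f (x, a))\<^sup>2) (x, a)) = (\<lambda>z. (W z)\<^sup>2)"
    by (auto simp: W_def fun_eq_iff power2_eq_square)
  note second = second[unfolded this]
  have "(\<integral>z. (W z - (\<integral>z. W z \<partial>joint PX A q))\<^sup>2 \<partial>joint PX A q)
      = (\<integral>z. (W z)\<^sup>2 \<partial>joint PX A q) - (\<integral>z. W z \<partial>joint PX A q)\<^sup>2"
    by (rule Q.variance_eq[OF first(1) second(1)])
  then show ?thesis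
    unfolding W_def[symmetric] first(2) second(2) .
qed

theorem proposition1:
  fixes PX :: "'x measure" and A :: "'a set"
    and \<pi>0 \<pi>\<theta> :: "'x \<Rightarrow> 'a \<Rightarrow> real"
    and f :: "'x \<times> 'a \<Rightarrow> real" and c b \<sigma> :: real
  assumes "prob_space PX"
    and "finite A"
    and "is_policy PX A \<pi>0" and "is_policy PX A \<pi>\<theta>"
    and "\<forall>x\<in>space PX. \<forall>a\<in>A. \<pi>0 x a > 0"
    and "f \<in> borel_measurable (PX \<Otimes>\<^sub>M count_space A)"
    and "\<forall>z\<in>space PX \<times> A. c \<le> f z \<and> f z \<le> b"
    and "b \<ge> 0"
    and "sub_gaussian (joint PX A \<pi>0) (\<lambda>(x, a). \<pi>\<theta> x a / \<pi>0 x a * (f (x, a))\<^sup>2) \<sigma>"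
    and "sub_gaussian (joint PX A \<pi>\<theta>) (\<lambda>(x, a). \<pi>\<theta> x a / \<pi>0 x a * (f (x, a))\<^sup>2) \<sigma>"
  shows "min (cond_KL PX A \<pi>\<theta> \<pi>0) (cond_KL PX A \<pi>0 \<pi>\<theta>) = \<infinity> \<or>
     (\<integral>z. ((\<lambda>(x, a). \<pi>\<theta> x a / \<pi>0 x a * f (x, a)) z
            - (\<integral>z. (\<lambda>(x, a). \<pi>\<theta> x a / \<pi>0 x a * f (x, a)) z \<partial>joint PX A \<pi>0))\<^sup>2
        \<partial>joint PX A \<pi>0)
     \<le> sqrt (2 * \<sigma>\<^sup>2 * enn2real (min (cond_KL PX A \<pi>\<theta> \<pi>0) (cond_KL PX A \<pi>0 \<pi>\<theta>)))
        + (max \<bar>c\<bar> b)\<^sup>2 - (max c 0)\<^sup>2"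
proof -
  note PX = assms(1) and fin = assms(2)
  interpret PX: prob_space PX by fact
  interpret J\<theta>: prob_space "joint PX A \<pi>\<theta>" by (rule prob_space_joint[OF PX fin assms(4)])
  have sigma: "sigma_finite_measure PX" ..
  have f_bound: "\<forall>z\<in>space PX \<times> A. \<bar>f z\<bar> \<le> max \<bar>c\<bar> b"
    using assms(7) by fastforce
  have f_bound2: "\<forall>z\<in>space PX \<times> A. \<bar>(f z)\<^sup>2\<bar> \<le> (max \<bar>c\<bar> b)\<^sup>2"
    using f_bound by (auto intro!: power_mono simp flip: abs_le_square_iff)
  have int_f: "integrable (joint PX A \<pi>\<theta>) f"
    using integrable_joint_bounded[OF PX fin assms(4,6) f_bound] .
  have int_f2: "integrable (joint PX A \<pi>\<theta>) (\<lambda>z. (f z)\<^sup>2)"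
    using assms(6) by (intro integrable_joint_bounded[OF PX fin assms(4) _ f_bound2]) measurable
  have "(\<integral>z. (f z)\<^sup>2 \<partial>joint PX A \<pi>\<theta>) \<le> (max \<bar>c\<bar> b)\<^sup>2"
    using int_f2 f_bound2 by (intro J\<theta>.integral_le_const AE_I2) (auto simp: space_joint)
  then have second_moment: "(\<integral>z. (\<lambda>(x, a). \<pi>\<theta> x a / \<pi>0 x a * (f (x, a))\<^sup>2) z \<partial>joint PX A \<pi>0) \<le> (max \<bar>c\<bar> b)\<^sup>2"
    using importance_weighting(2)[OF sigma fin assms(4,3,5) int_f2] by simp
  have "c \<le> (\<integral>z. f z \<partial>joint PX A \<pi>\<theta>)"
    using int_f assms(7) by (intro J\<theta>.integral_ge_const AE_I2) (auto simp: space_joint)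
  then have mean: "(max c 0)\<^sup>2 \<le> (\<integral>z. f z \<partial>joint PX A \<pi>\<theta>)\<^sup>2"
    by (cases "0 \<le> c") (auto intro: power_mono)
  have "integrable (joint PX A \<pi>\<theta>) (\<lambda>(x, a). \<pi>\<theta> x a / \<pi>0 x a * (f (x, a))\<^sup>2)"
    using assms(10) by (simp add: sub_gaussian_def)
  note variance = variance_importance_weighted[OF PX fin assms(4,3,5) int_f this]
  show ?thesis
    using mean_deviation_le_min_cond_KL[OF PX fin assms(4,3,10,9)] second_moment mean
    unfolding variance by force
qed

end
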